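(* Let $X$ be an exponential vector space over a field $K$ and let $B$ be a basis of $X\smallsetminus X_0$. Then for each $x\in B$, $\{y\in X: y\leq x\}\smallsetminus X_0\subseteq L(x)$.
   Context: An exponential vector space (evs) over a field $K$ is a partially ordered set $(X,\leq)$ with a binary operation $+$ on $X$ and a map $K\times X\to X$, $(\alpha,x)\mapsto \alpha x$, such that: (A1) $(X,+)$ is a commutative semigroup with identity $\theta$; (A2) $x\leq y$ implies $x+z\leq y+z$ and $\alpha x\leq \alpha y$ for all $z\in X$, $\alpha\in K$; (A3) $\alpha(x+y)=\alpha x+\alpha y$, $\alpha(\beta x)=(\alpha\beta)x$, $(\alpha+\beta)x\leq \alpha x+\beta x$, $1x=x$; (A4) $\alpha x=\theta$ iff $\alpha=0$ or $x=\theta$; (A5) $x+(-1)x=\theta$ iff $x\in X_0$, where $X_0:=\{z\in X: y\not\leq z \text{ for all } y\in X\smallsetminus\{z\}\}$ (the set of minimal elements, called the primitive space; it is a vector space over $K$); (A6) for each $x\in X$ there is $p\in X_0$ with $p\leq x$. For $x\in X\smallsetminus X_0$ let $L(x):=\{z\in X: z\geq \alpha x+p \text{ for some } \alpha\in K\smallsetminus\{0\},\ p\in X_0\}$. A subset $B\subseteq X\smallsetminus X_0$ generates $X\smallsetminus X_0$ if $X\smallsetminus X_0=\bigcup_{b\in B}L(b)$. Elements $x,y\in X\smallsetminus X_0$ are orderly dependent if $x\in L(y)$ or $y\in L(x)$, and orderly independent otherwise; $B\subseteq X\smallsetminus X_0$ is orderly independent if any two distinct members of $B$ are orderly independent. A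 basis of $X\smallsetminus X_0$ is an orderly independent subset of $X\smallsetminus X_0$ that generates $X\smallsetminus X_0$. *)

theory Defs
  imports Main
begin

definition primitive :: "('x \<Rightarrow> 'x \<Rightarrow> bool) \<Rightarrow> 'x set" where
  "primitive le = {z. \<forall>y. y \<noteq> z \<longrightarrow> \<not> le y z}"

definition evs :: "('x \<Rightarrow> 'x \<Rightarrow> bool) \<Rightarrow> ('x \<Rightarrow> 'x \<Rightarrow> 'x) \<Rightarrow> 'x
    \<Rightarrow> ('k::field \<Rightarrow> 'x \<Rightarrow> 'x) \<Rightarrow> bool" where
  "evs le add theta smult \<longleftrightarrow>
     (\<forall>x. le x x) \<and> (\<forall>x y. le x y \<and> le y x \<longrightarrow> x = y)
   \<and> (\<forall>x y z. le x y \<and> le y z \<longrightarrow> le x z)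
   \<comment> \<open>(A1)\<close>
   \<and> (\<forall>x y z. add (add x y) z = add x (add y z))
   \<and> (\<forall>x y. add x y = add y x)
   \<and> (\<forall>x. add x theta = x)
   \<comment> \<open>(A2)\<close>
   \<and> (\<forall>x y z. le x y \<longrightarrow> le (add x z) (add y z))
   \<and> (\<forall>x y \<alpha>. le x y \<longrightarrow> le (smult \<alpha> x) (smult \<alpha> y))
   \<comment> \<open>(A3)\<close>
   \<and> (\<forall>\<alpha> x y. smult \<alpha> (add x y) = add (smult \<alpha> x) (smult \<alpha> y))
   \<and> (\<forall>\<alpha> \<beta> x. smult \<alpha> (smult \<beta> x) = smult (\<alpha> * \<beta>) x)
   \<and> (\<forall>\<alpha> \<beta> x. le (smult (\<alpha> + \<beta>) x) (add (smult \<alpha> x) (smult \<beta> x)))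
   \<and> (\<forall>x. smult 1 x = x)
   \<comment> \<open>(A4)\<close>
   \<and> (\<forall>\<alpha> x. smult \<alpha> x = theta \<longleftrightarrow> \<alpha> = 0 \<or> x = theta)
   \<comment> \<open>(A5)\<close>
   \<and> (\<forall>x. add x (smult (-1) x) = theta \<longleftrightarrow> x \<in> primitive le)
   \<comment> \<open>(A6)\<close>
   \<and> (\<forall>x. \<exists>p\<in>primitive le. le p x)"

definition Lset :: "('x \<Rightarrow> 'x \<Rightarrow> bool) \<Rightarrow> ('x \<Rightarrow> 'x \<Rightarrow> 'x)
    \<Rightarrow> ('k::field \<Rightarrow> 'x \<Rightarrow> 'x) \<Rightarrow> 'x \<Rightarrow> 'x set" where
  "Lset le add smult x =
     {z. \<exists>\<alpha> p. \<alpha> \<noteq> 0 \<and> p \<in> primitive le \<and> le (add (smult \<alpha> x) p) z}"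

definition orderly_independent_set :: "('x \<Rightarrow> 'x \<Rightarrow> bool) \<Rightarrow> ('x \<Rightarrow> 'x \<Rightarrow> 'x)
    \<Rightarrow> ('k::field \<Rightarrow> 'x \<Rightarrow> 'x) \<Rightarrow> 'x set \<Rightarrow> bool" where
  "orderly_independent_set le add smult B \<longleftrightarrow>
     (\<forall>x\<in>B. \<forall>y\<in>B. x \<noteq> y \<longrightarrow>
        x \<notin> Lset le add smult y \<and> y \<notin> Lset le add smult x)"

definition generates :: "('x \<Rightarrow> 'x \<Rightarrow> bool) \<Rightarrow> ('x \<Rightarrow> 'x \<Rightarrow> 'x)
    \<Rightarrow> ('k::field \<Rightarrow> 'x \<Rightarrow> 'x) \<Rightarrow> 'x set \<Rightarrow> bool" where
  "generates le add smult B \<longleftrightarrow>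
     - primitive le = (\<Union>b\<in>B. Lset le add smult b)"

definition is_basis :: "('x \<Rightarrow> 'x \<Rightarrow> bool) \<Rightarrow> ('x \<Rightarrow> 'x \<Rightarrow> 'x)
    \<Rightarrow> ('k::field \<Rightarrow> 'x \<Rightarrow> 'x) \<Rightarrow> 'x set \<Rightarrow> bool" where
  "is_basis le add smult B \<longleftrightarrow>
     B \<subseteq> - primitive le \<and> orderly_independent_set le add smult B
     \<and> generates le add smult B"

end

theory Submission
  imports Defs
begin

text \<open>Each L(b) is upward closed. So if y is a non-primitive element below the basis
  element x, and y lies in L(b) for some b in B, then x lies in L(b) as well; orderly
  independence of B forces b = x.\<close>

lemma evs_transp:
  assumes "evs le add theta smult"
  shows "transp le"
  using assms unfolding evs_def transp_def by metis

lemma Lset_upward_closed: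
  assumes "transp le" and "z \<in> Lset le add smult b" and "le z w"
  shows "w \<in> Lset le add smult b"
  using assms unfolding Lset_def transp_def by blast

lemma orderly_independent_set_Lset_eq:
  assumes "orderly_independent_set le add smult B" and "b \<in> B" and "x \<in> B"
    and "x \<in> Lset le add smult b"
  shows "b = x"
  using assms unfolding orderly_independent_set_def by blast

lemma generates_obtain:
  assumes "generates le add smult B" and "y \<notin> primitive le"
  obtains b where "b \<in> B" and "y \<in> Lset le add smult b"
  using assms unfolding generates_def by blast

theorem mainTheorem18:
  fixes le :: "'x \<Rightarrow> 'x \<Rightarrow> bool" and add :: "'x \<Rightarrow> 'x \<Rightarrow> 'x" and theta :: 'x
    and smult :: "'k::field \<Rightarrow> 'x \<Rightarrow> 'x" and B :: "'x set" and x :: 'x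
  assumes "evs le add theta smult"
    and "is_basis le add smult B"
    and "x \<in> B"
  shows "{y. le y x} - primitive le \<subseteq> Lset le add smult x"
proof
  fix y
  assume y: "y \<in> {y. le y x} - primitive le"
  have indep: "orderly_independent_set le add smult B"
    and gen: "generates le add smult B"
    using assms(2) unfolding is_basis_def by auto
  obtain b where b: "b \<in> B" and y_in_Lb: "y \<in> Lset le add smult b"
    using generates_obtain[OF gen] y by blast
  have "x \<in> Lset le add smult b"
    using Lset_upward_closed[OF evs_transp[OF assms(1)] y_in_Lb] y by blast
  then have "b = x"
    by (rule orderly_independent_set_Lset_eq[OF indep b assms(3)])
  then show "y \<in> Lset le add smult x"
    using y_in_Lb by simp
qed

end
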